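(* Let $A$ be a formula of $\mathrm{SN}$ that does not contain the constant $t$ and contains no subformula of the form $NB$ with $B$ non-atomic (so $A$ is also a formula of $\mathbf{CN}$, with atomic formulas $p$ and $Np$). Then $\mathbf{CN}\vdash A$ if and only if $\mathrm{SN}\vdash t\to A$.
   Context: $\mathbf{CN}$: atomic formulas are $p$ and $Np$ for basic atoms $p$ (treated as distinct classical atoms), formulas use classical connectives, and $\mathbf{CN}\vdash A$ iff $\{Np\to\neg p\mid p\text{ basic atom}\}\vdash A$ in classical propositional logic. $\mathrm{SN}$: formulas are built from atoms $p$, $\top,\bot$, a propositional constant $t$, with $\neg,\wedge,\vee,\to$ and a unary connective $N$ (applicable to any formula). $\mathrm{SN}\vdash A$ is generated by all classical tautologies; axioms (K) $N(A\wedge B)\leftrightarrow NA\vee NB$; (F) $\neg NA\leftrightarrow N\neg A$; (C) $A\to NNA$; (A) $t\to(p\to N\neg p)$ for atoms $p$; (T) $t\leftrightarrow Nt$; rules modus ponens and (N): from $A$ infer $N\neg A$. (Semantically, $\mathrm{SN}$-models are $(\{1,2\},v)$ with $v(p)\subseteq\{1,2\}$, $1\in v(p)\Rightarrow 2\in v(p)$; $m\vDash t$ iff $m=1$; classical clauses; $1\vDash NA$ iff $2\nvDash A$, $2\vDash NA$ iff $1\nvDash A$.) *)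

theory Defs
  imports Main
begin

datatype 'a form =
    Atom 'a
  | Top
  | Bot
  | Tc
  | Neg "'a form"
  | Conj "'a form" "'a form"
  | Disj "'a form" "'a form"
  | Imp "'a form" "'a form"
  | Nop "'a form" (* the unary connective N *)

definition Iff :: "'a form \<Rightarrow> 'a form \<Rightarrow> 'a form" where
  "Iff A B = Conj (Imp A B) (Imp B A)"

text \<open>Classical evaluation, treating atoms, t and formulas N B as propositional atoms.\<close>
fun ceval :: "('a form \<Rightarrow> bool) \<Rightarrow> 'a form \<Rightarrow> bool" where
  "ceval V (Atom p) = V (Atom p)"
| "ceval V Top = True"
| "ceval V Bot = False"
| "ceval V Tc = V Tc"
| "ceval V (Neg A) = (\<not> ceval V A)"
| "ceval V (Conj A B) = (ceval V A \<and> ceval V B)"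
| "ceval V (Disj A B) = (ceval V A \<or> ceval V B)"
| "ceval V (Imp A B) = (ceval V A \<longrightarrow> ceval V B)"
| "ceval V (Nop A) = V (Nop A)"

definition tautology :: "'a form \<Rightarrow> bool" where
  "tautology A \<longleftrightarrow> (\<forall>V. ceval V A)"

inductive SN_prov :: "'a form \<Rightarrow> bool" where
  taut: "tautology A \<Longrightarrow> SN_prov A"
| axK: "SN_prov (Iff (Nop (Conj A B)) (Disj (Nop A) (Nop B)))"
| axF: "SN_prov (Iff (Neg (Nop A)) (Nop (Neg A)))"
| axC: "SN_prov (Imp A (Nop (Nop A)))"
| axA: "SN_prov (Imp Tc (Imp (Atom p) (Nop (Neg (Atom p)))))"
| axT: "SN_prov (Iff Tc (Nop Tc))"
| mp: "SN_prov (Imp A B) \<Longrightarrow> SN_prov A \<Longrightarrow> SN_prov B"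
| ruleN: "SN_prov A \<Longrightarrow> SN_prov (Nop (Neg A))"

fun cn_fragment :: "'a form \<Rightarrow> bool" where
  "cn_fragment (Atom p) = True"
| "cn_fragment Top = True"
| "cn_fragment Bot = True"
| "cn_fragment Tc = False"
| "cn_fragment (Neg A) = cn_fragment A"
| "cn_fragment (Conj A B) = (cn_fragment A \<and> cn_fragment B)"
| "cn_fragment (Disj A B) = (cn_fragment A \<and> cn_fragment B)"
| "cn_fragment (Imp A B) = (cn_fragment A \<and> cn_fragment B)"
| "cn_fragment (Nop A) = (\<exists>p. A = Atom p)"

text \<open>CN atoms: p and Np, treated as distinct classical atoms.\<close>
datatype 'a cn_atom = PosA 'a | NA 'a

datatype 'a cform =
    CAtom "'a cn_atom"
  | CTop
  | CBot
  | CNeg "'a cform"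
  | CConj "'a cform" "'a cform"
  | CDisj "'a cform" "'a cform"
  | CImp "'a cform" "'a cform"

fun cn_eval :: "('a cn_atom \<Rightarrow> bool) \<Rightarrow> 'a cform \<Rightarrow> bool" where
  "cn_eval v (CAtom a) = v a"
| "cn_eval v CTop = True"
| "cn_eval v CBot = False"
| "cn_eval v (CNeg A) = (\<not> cn_eval v A)"
| "cn_eval v (CConj A B) = (cn_eval v A \<and> cn_eval v B)"
| "cn_eval v (CDisj A B) = (cn_eval v A \<or> cn_eval v B)"
| "cn_eval v (CImp A B) = (cn_eval v A \<longrightarrow> cn_eval v B)"

text \<open>CN \<turnstile> A iff A is a classical consequence of {Np \<rightarrow> \<not>p | p atom}
  (classical consequence rendered semantically, via valuations).\<close>
definition CN_prov :: "'a cform \<Rightarrow> bool" where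
  "CN_prov A \<longleftrightarrow> (\<forall>v. (\<forall>p. v (NA p) \<longrightarrow> \<not> v (PosA p)) \<longrightarrow> cn_eval v A)"

text \<open>Reading an SN formula of the CN fragment as a CN formula
  (the value on formulas outside the fragment is irrelevant).\<close>
fun to_cn :: "'a form \<Rightarrow> 'a cform" where
  "to_cn (Atom p) = CAtom (PosA p)"
| "to_cn Top = CTop"
| "to_cn Bot = CBot"
| "to_cn Tc = CBot"
| "to_cn (Neg A) = CNeg (to_cn A)"
| "to_cn (Conj A B) = CConj (to_cn A) (to_cn B)"
| "to_cn (Disj A B) = CDisj (to_cn A) (to_cn B)"
| "to_cn (Imp A B) = CImp (to_cn A) (to_cn B)"
| "to_cn (Nop A) = (case A of Atom p \<Rightarrow> CAtom (NA p) | _ \<Rightarrow> CBot)"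

end

theory Submission
  imports Defs
begin

text \<open>SN is sound for its two-world models, and at world 1 (where t holds) a formula of the CN
  fragment is evaluated exactly as in CN, reading N p as "p fails at world 2"; heredity of
  the valuation is the CN constraint Np \<rightarrow> \<not>p. This gives CN \<turnstile> A from SN \<turnstile> t \<rightarrow> A.
  Conversely, (A) and (F) make t \<rightarrow> (Np \<rightarrow> \<not>p) an SN theorem, and t \<rightarrow> A is a tautological
  consequence of finitely many of these instances whenever CN \<turnstile> A, so SN \<turnstile> t \<rightarrow> A.\<close>

text \<open>The world argument encodes the two worlds as booleans: True is world 1, False is world 2.\<close>
fun sn_sat :: "('a \<Rightarrow> bool \<Rightarrow> bool) \<Rightarrow> bool \<Rightarrow> 'a form \<Rightarrow> bool" where
  "sn_sat v w (Atom p) = v p w"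
| "sn_sat v w Top = True"
| "sn_sat v w Bot = False"
| "sn_sat v w Tc = w"
| "sn_sat v w (Neg A) = (\<not> sn_sat v w A)"
| "sn_sat v w (Conj A B) = (sn_sat v w A \<and> sn_sat v w B)"
| "sn_sat v w (Disj A B) = (sn_sat v w A \<or> sn_sat v w B)"
| "sn_sat v w (Imp A B) = (sn_sat v w A \<longrightarrow> sn_sat v w B)"
| "sn_sat v w (Nop A) = (\<not> sn_sat v (\<not> w) A)"

definition hereditary :: "('a \<Rightarrow> bool \<Rightarrow> bool) \<Rightarrow> bool" where
  "hereditary v \<longleftrightarrow> (\<forall>p. v p True \<longrightarrow> v p False)"

lemma ceval_sn_sat: "ceval (sn_sat v w) A = sn_sat v w A"
  by (induction A) auto

theorem SN_prov_sound:
  assumes "SN_prov A" and "hereditary v"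
  shows "sn_sat v w A"
  using assms
proof (induction A arbitrary: w rule: SN_prov.induct)
  case (taut A)
  then show ?case by (simp add: tautology_def flip: ceval_sn_sat)
next
  case (axA p)
  then show ?case by (cases w) (auto simp: hereditary_def)
qed (auto simp: Iff_def)

lemma sn_sat_cn_fragment_eq_cn_eval:
  assumes "cn_fragment A"
  shows "sn_sat (\<lambda>p w. if w then u (PosA p) else \<not> u (NA p)) True A = cn_eval u (to_cn A)"
  using assms by (induction A) auto

lemma SN_prov_imp_CN_prov:
  assumes "cn_fragment A" and "SN_prov (Imp Tc A)"
  shows "CN_prov (to_cn A)"
  unfolding CN_prov_def
proof (intro allI impI)
  fix u :: "'a cn_atom \<Rightarrow> bool"
  assume "\<forall>p. u (NA p) \<longrightarrow> \<not> u (PosA p)"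
  then have "hereditary (\<lambda>p w. if w then u (PosA p) else \<not> u (NA p))"
    by (auto simp: hereditary_def)
  with \<open>SN_prov (Imp Tc A)\<close> show "cn_eval u (to_cn A)"
    using SN_prov_sound sn_sat_cn_fragment_eq_cn_eval[OF \<open>cn_fragment A\<close>] by fastforce
qed

lemma SN_prov_tautological_consequence:
  assumes "finite S" and "\<forall>B\<in>S. SN_prov B" and "\<forall>V. (\<forall>B\<in>S. ceval V B) \<longrightarrow> ceval V C"
  shows "SN_prov C"
  using assms
proof (induction S arbitrary: C rule: finite_induct)
  case empty
  then show ?case by (simp add: SN_prov.taut tautology_def)
next
  case (insert B S)
  then have "SN_prov (Imp B C)" by simp
  with insert.prems show ?case by (auto intro: SN_prov.mp)
qed

lemma SN_prov_Tc_imp_Nop_Atom_imp_Neg: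
  "SN_prov (Imp Tc (Imp (Nop (Atom p)) (Neg (Atom p))))"
  by (rule SN_prov_tautological_consequence
      [of "{Imp Tc (Imp (Atom p) (Nop (Neg (Atom p)))), Iff (Neg (Nop (Atom p))) (Nop (Neg (Atom p)))}"])
    (auto simp: Iff_def intro: SN_prov.axA SN_prov.axF[unfolded Iff_def])

fun atoms :: "'a form \<Rightarrow> 'a set" where
  "atoms (Atom p) = {p}"
| "atoms Top = {}"
| "atoms Bot = {}"
| "atoms Tc = {}"
| "atoms (Neg A) = atoms A"
| "atoms (Conj A B) = atoms A \<union> atoms B"
| "atoms (Disj A B) = atoms A \<union> atoms B"
| "atoms (Imp A B) = atoms A \<union> atoms B"
| "atoms (Nop A) = atoms A"

lemma finite_atoms: "finite (atoms A)"
  by (induction A) auto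

lemma cn_eval_to_cn_eq_ceval:
  assumes "cn_fragment A"
    and "\<forall>p\<in>atoms A. u (PosA p) = V (Atom p) \<and> u (NA p) = V (Nop (Atom p))"
  shows "cn_eval u (to_cn A) = ceval V A"
  using assms by (induction A) auto

lemma CN_prov_imp_SN_prov:
  assumes "cn_fragment A" and "CN_prov (to_cn A)"
  shows "SN_prov (Imp Tc A)"
proof (rule SN_prov_tautological_consequence)
  let ?S = "(\<lambda>p. Imp Tc (Imp (Nop (Atom p)) (Neg (Atom p)))) ` atoms A"
  show "finite ?S"
    by (simp add: finite_atoms)
  show "\<forall>B\<in>?S. SN_prov B"
    using SN_prov_Tc_imp_Nop_Atom_imp_Neg by auto
  show "\<forall>V. (\<forall>B\<in>?S. ceval V B) \<longrightarrow> ceval V (Imp Tc A)"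
  proof (intro allI impI)
    fix V :: "'a form \<Rightarrow> bool"
    assume S: "\<forall>B\<in>?S. ceval V B"
    show "ceval V (Imp Tc A)"
    proof (cases "V Tc")
      case True
      \<comment> \<open>Forcing N p false where p holds meets the CN constraint; by the instances in ?S and V Tc
        this changes nothing on the atoms of A.\<close>
      define u where "u a = (case a of PosA p \<Rightarrow> V (Atom p) | NA p \<Rightarrow> V (Nop (Atom p)) \<and> \<not> V (Atom p))"
        for a
      have "cn_eval u (to_cn A)"
        using \<open>CN_prov (to_cn A)\<close> by (simp add: CN_prov_def u_def)
      moreover have "\<forall>p\<in>atoms A. u (PosA p) = V (Atom p) \<and> u (NA p) = V (Nop (Atom p))"
        using S True by (auto simp: u_def)
      ultimately have "ceval V A"
        using cn_eval_to_cn_eq_ceval[OF \<open>cn_fragment A\<close>] by blast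
      then show ?thesis by simp
    qed simp
  qed
qed

theorem theorem35:
  fixes A :: "'a form"
  assumes "cn_fragment A"
  shows "CN_prov (to_cn A) \<longleftrightarrow> SN_prov (Imp Tc A)"
  using assms SN_prov_imp_CN_prov CN_prov_imp_SN_prov by blast

end
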